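(* Let $X$ be a $\mathbb{Z}^n$-periodic discrete metric space with orbit representatives $x_1,\dots,x_N$, let $p\in[1,\infty]$, and let $A$ be a band operator on $l^p(X)$. Then $UAU^{-1}$ is a band operator on $l^p(\mathbb{Z}^n,\mathbb{C}^N)$, i.e. it can be written as $\sum_{|\alpha|\le m} a_\alpha V_\alpha$ for some $m$ and some $a_\alpha\in l^\infty(\mathbb{Z}^n,\mathbb{C}^{N\times N})$.
   Context: A discrete metric space is a countable set $X$ with a metric $\rho$ such that every ball $\{x:\rho(x,x_0)\le r\}$ is finite. It is $\mathbb{Z}^n$-periodic if $\mathbb{Z}^n$ acts on $X$, $(\alpha,x)\mapsto\alpha\cdot x$, with $0\cdot x=x$, $(\alpha+\beta)\cdot x=\alpha\cdot(\beta\cdot x)$, $\rho(\alpha\cdot x,\alpha\cdot y)=\rho(x,y)$, the action is free ($\alpha\cdot x=x$ implies $\alpha=0$), and there are finitely many orbits; $x_1,\dots,x_N$ are fixed representatives of the $N$ orbits. $U:l^p(X)\to l^p(\mathbb{Z}^n,\mathbb{C}^N)$ is $(Uf)(\alpha)=(f(\alpha\cdot x_1),\dots,f(\alpha\cdot x_N))$, an isometric isomorphism. On $l^p(\mathbb{Z}^n,\mathbb{C}^N)$, $(V_\alpha u)(x)=u(x-\alpha)$ and $a\in l^\infty(\mathbb{Z}^n,\mathbb{C}^{N\times N})$ acts by $(au)(x)=a(x)u(x)$. A linear operator $A$ on $l^p(X)$ has generating function $k_A:X\times X\to\mathbb{C}$ if $(Au)(x)=\sum_{y\in X}k_A(x,y)u(y)$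 for all finitely supported $u$. $A$ is a band operator on $l^p(X)$ if it has a bounded generating function $k_A$ and there is $R>0$ with $k_A(x,y)=0$ whenever $\rho(x,y)>R$.
   Formalization: In the definition of a band operator, the generating-function formula expressing (Au)(x) through $k_A$ holds for every u in $l^p(X)$, not only for finitely supported u. The statement above fails without it. *)

theory Defs
  imports "HOL-Analysis.Analysis" "HOL-Library.Countable"
begin

definition lp :: "ennreal \<Rightarrow> ('a \<Rightarrow> 'b::real_normed_vector) set" where
  "lp p = (if p = \<infinity> then {f. bounded (range f)}
           else {f. (\<lambda>x. norm (f x) powr enn2real p) summable_on UNIV})"

text \<open>A discrete metric space: a metric all of whose closed balls are finite
 (countability of the carrier is imposed via the type class countable).\<close>
definition discrete_metric :: "('x \<Rightarrow> 'x \<Rightarrow> real) \<Rightarrow> bool" where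
  "discrete_metric \<rho> \<longleftrightarrow>
     (\<forall>x y. \<rho> x y = 0 \<longleftrightarrow> x = y) \<and> (\<forall>x y. \<rho> x y = \<rho> y x) \<and>
     (\<forall>x y z. \<rho> x z \<le> \<rho> x y + \<rho> y z) \<and>
     (\<forall>x0 r. finite {x. \<rho> x x0 \<le> r})"

text \<open>Z^n-periodicity with orbit representatives r j, j ranging over the finite type 'k
 (so N = CARD('k)).\<close>
definition periodic_space ::
  "('x \<Rightarrow> 'x \<Rightarrow> real) \<Rightarrow> (int^'n \<Rightarrow> 'x \<Rightarrow> 'x) \<Rightarrow> ('k::finite \<Rightarrow> 'x) \<Rightarrow> bool" where
  "periodic_space \<rho> act r \<longleftrightarrow>
     (\<forall>x. act 0 x = x) \<and>
     (\<forall>\<alpha> \<beta> x. act (\<alpha> + \<beta>) x = act \<alpha> (act \<beta> x)) \<and>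
     (\<forall>\<alpha> x y. \<rho> (act \<alpha> x) (act \<alpha> y) = \<rho> x y) \<and>
     (\<forall>\<alpha> x. act \<alpha> x = x \<longrightarrow> \<alpha> = 0) \<and>
     (\<forall>x. \<exists>\<alpha> j. x = act \<alpha> (r j)) \<and>
     (\<forall>i j \<alpha>. r i = act \<alpha> (r j) \<longrightarrow> i = j)"

definition Uop :: "(int^'n \<Rightarrow> 'x \<Rightarrow> 'x) \<Rightarrow> ('k::finite \<Rightarrow> 'x) \<Rightarrow> ('x \<Rightarrow> complex)
                   \<Rightarrow> int^'n \<Rightarrow> complex^'k" where
  "Uop act r f \<alpha> = (\<chi> j. f (act \<alpha> (r j)))"

definition Uinv :: "(int^'n \<Rightarrow> 'x \<Rightarrow> 'x) \<Rightarrow> ('k::finite \<Rightarrow> 'x) \<Rightarrow> (int^'n \<Rightarrow> complex^'k)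
                   \<Rightarrow> 'x \<Rightarrow> complex" where
  "Uinv act r v x = (let (\<alpha>, j) = (THE (\<alpha>, j). x = act \<alpha> (r j)) in v \<alpha> $ j)"

definition Vshift :: "int^'n \<Rightarrow> (int^'n \<Rightarrow> 'b) \<Rightarrow> int^'n \<Rightarrow> 'b" where
  "Vshift \<alpha> u x = u (x - \<alpha>)"

text \<open>The generating-function formula is required on all of l^p(X) (the sum has only
 finitely many non-zero terms).\<close>
definition band_operator ::
  "('x \<Rightarrow> 'x \<Rightarrow> real) \<Rightarrow> ennreal \<Rightarrow> (('x \<Rightarrow> complex) \<Rightarrow> ('x \<Rightarrow> complex)) \<Rightarrow> bool" where
  "band_operator \<rho> p A \<longleftrightarrow>
     (\<forall>u \<in> lp p. A u \<in> lp p) \<and>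
     (\<exists>k :: 'x \<Rightarrow> 'x \<Rightarrow> complex.
        (\<exists>C. \<forall>x y. norm (k x y) \<le> C) \<and>
        (\<exists>R>0. \<forall>x y. \<rho> x y > R \<longrightarrow> k x y = 0) \<and>
        (\<forall>u \<in> lp p. \<forall>x. A u x = (\<Sum>\<^sub>\<infinity>y. k x y * u y)))"

end

theory Submission
  imports Defs
begin

text \<open>Transport the band structure along the bijection (\<alpha>, j) \<mapsto> \<alpha>\<cdot>x_j between
  \<int>^n \<times> {1..N} and X. Writing a_\<alpha>(x)_ij = k(x\<cdot>x_i, (x - \<alpha>)\<cdot>x_j), the row sum defining
  (A u)(x\<cdot>x_i) becomes \<Sum>_\<alpha> (a_\<alpha>(x) (V_\<alpha> v)(x))_i. By invariance of the metric, the entry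
  a_\<alpha>(x)_ij can only be non-zero when \<rho>(\<alpha>\<cdot>x_i, x_j) \<le> R, and since balls are finite and
  the action is free, only finitely many \<alpha> qualify; they all lie in a box |\<alpha>|_\<infinity> \<le> m.
  Boundedness of a_\<alpha> is inherited from the kernel, and U^-1 maps l^p into l^p because it
  is a reindexing of the components.\<close>

lemma finite_box: "finite {\<alpha>::int^'n. \<forall>i. \<bar>\<alpha> $ i\<bar> \<le> int m}"
proof -
  have "{\<alpha>::int^'n. \<forall>i. \<bar>\<alpha> $ i\<bar> \<le> int m} \<subseteq> vec_lambda ` (PiE UNIV (\<lambda>_. {-int m..int m}))"
  proof
    fix \<alpha> :: "int^'n" assume "\<alpha> \<in> {\<alpha>. \<forall>i. \<bar>\<alpha> $ i\<bar> \<le> int m}"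
    then have "vec_nth \<alpha> \<in> PiE UNIV (\<lambda>_. {-int m..int m})" by (auto simp: abs_le_iff minus_le_iff)
    then show "\<alpha> \<in> vec_lambda ` (PiE UNIV (\<lambda>_. {-int m..int m}))"
      by (metis image_eqI vec_nth_inverse)
  qed
  moreover have "finite (PiE (UNIV::'n set) (\<lambda>_. {-int m..int m}))"
    by (rule finite_PiE) auto
  ultimately show ?thesis using finite_subset finite_imageI by blast
qed

lemma finite_subset_box:
  assumes "finite (T :: (int^'n) set)"
  shows "\<exists>m::nat. T \<subseteq> {\<alpha>. \<forall>i. \<bar>\<alpha> $ i\<bar> \<le> int m}"
proof
  let ?m = "\<Sum>\<alpha>\<in>T. \<Sum>l\<in>UNIV. nat \<bar>\<alpha> $ l\<bar>"
  show "T \<subseteq> {\<alpha>. \<forall>i. \<bar>\<alpha> $ i\<bar> \<le> int ?m}"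
  proof (intro subsetI CollectI allI)
    fix \<alpha> l assume "\<alpha> \<in> T"
    have "nat \<bar>\<alpha> $ l\<bar> \<le> (\<Sum>l\<in>UNIV. nat \<bar>\<alpha> $ l\<bar>)"
      by (rule member_le_sum) auto
    also have "\<dots> \<le> ?m"
      using \<open>\<alpha> \<in> T\<close> assms by (intro member_le_sum) auto
    finally show "\<bar>\<alpha> $ l\<bar> \<le> int ?m" by linarith
  qed
qed

lemma norm_vec_le_sum_norm: "norm (x :: 'a::real_normed_vector^'k) \<le> (\<Sum>i\<in>UNIV. norm (x $ i))"
  unfolding norm_vec_def by (rule L2_set_le_sum) simp

lemma norm_matrix_le_entry_bound:
  fixes M :: "'a::real_normed_vector^'k^'l"
  assumes "\<And>i j. norm (M $ i $ j) \<le> C"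
  shows "norm M \<le> real CARD('l) * (real CARD('k) * C)"
proof -
  have "norm M \<le> (\<Sum>i\<in>UNIV. norm (M $ i))" by (rule norm_vec_le_sum_norm)
  also have "\<dots> \<le> (\<Sum>i\<in>(UNIV::'l set). \<Sum>j\<in>(UNIV::'k set). C)"
    using assms by (intro sum_mono order.trans[OF norm_vec_le_sum_norm]) auto
  finally show ?thesis by simp
qed

lemma lp_reindex_bij:
  assumes "bij_betw g UNIV UNIV"
  shows "f \<circ> g \<in> lp p \<longleftrightarrow> f \<in> lp p"
proof -
  have "range (f \<circ> g) = f ` range g" by (rule image_comp[symmetric])
  also have "\<dots> = range f" using assms by (simp add: bij_betw_def)
  finally have "range (f \<circ> g) = range f" .
  moreover have "(\<lambda>x. norm ((f \<circ> g) x) powr q) summable_on UNIV \<longleftrightarrow>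
      (\<lambda>y. norm (f y) powr q) summable_on UNIV" for q
    using summable_on_reindex_bij_betw[OF assms] by simp
  ultimately show ?thesis unfolding lp_def by simp
qed

lemma lp_uncurry_components:
  fixes v :: "'a \<Rightarrow> 'b::real_normed_vector^'k"
  assumes "v \<in> lp p"
  shows "(\<lambda>(\<alpha>, j). v \<alpha> $ j) \<in> lp p"
proof (cases "p = \<infinity>")
  case True
  then obtain B where "\<And>\<alpha>. norm (v \<alpha>) \<le> B"
    using assms unfolding lp_def bounded_iff by auto
  then have "norm (v \<alpha> $ j) \<le> B" for \<alpha> j
    by (rule order.trans[OF Finite_Cartesian_Product.norm_nth_le])
  then show ?thesis using True unfolding lp_def bounded_iff by auto
next
  case False
  define q where "q = enn2real p"
  have "(\<lambda>\<alpha>. norm (v \<alpha>) powr q) summable_on UNIV"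
    using assms False unfolding lp_def q_def by auto
  then have "(\<lambda>\<alpha>. real CARD('k) * norm (v \<alpha>) powr q) summable_on UNIV"
    by (rule summable_on_cmult_right)
  then have rows: "(\<lambda>\<alpha>. \<Sum>j\<in>UNIV. norm (v \<alpha> $ j) powr q) summable_on UNIV"
  proof (rule summable_on_comparison_test)
    fix \<alpha>
    have "(\<Sum>j\<in>UNIV. norm (v \<alpha> $ j) powr q) \<le> (\<Sum>j\<in>(UNIV::'k set). norm (v \<alpha>) powr q)"
      by (intro sum_mono powr_mono2) (auto simp: Finite_Cartesian_Product.norm_nth_le q_def)
    then show "(\<Sum>j\<in>UNIV. norm (v \<alpha> $ j) powr q) \<le> real CARD('k) * norm (v \<alpha>) powr q"
      by simp
  qed (simp add: sum_nonneg)
  have "(\<lambda>x. norm ((\<lambda>(\<alpha>, j). v \<alpha> $ j) x) powr q) summable_on UNIV \<times> UNIV"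
    by (rule summable_on_SigmaI[OF _ rows]) (auto simp: has_sum_finite)
  then show ?thesis using False unfolding lp_def q_def by simp
qed

context
  fixes \<rho> :: "'x \<Rightarrow> 'x \<Rightarrow> real"
    and act :: "int^'n \<Rightarrow> 'x \<Rightarrow> 'x"
    and r :: "'k::finite \<Rightarrow> 'x"
  assumes periodic: "periodic_space \<rho> act r"
begin

lemma act_zero: "act 0 x = x"
  and act_add: "act (\<alpha> + \<beta>) x = act \<alpha> (act \<beta> x)"
  and dist_act: "\<rho> (act \<alpha> x) (act \<alpha> y) = \<rho> x y"
  and act_fixed: "act \<alpha> x = x \<Longrightarrow> \<alpha> = 0"
  and orbit_representative: "\<exists>\<alpha> j. x = act \<alpha> (r j)"
  and representatives_distinct: "r i = act \<alpha> (r j) \<Longrightarrow> i = j"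
  using periodic unfolding periodic_space_def by (simp, simp, simp, metis, metis, metis)

lemma act_neg_act: "act (- \<alpha>) (act \<alpha> x) = x"
  using act_add[of "- \<alpha>" \<alpha> x] by (simp add: act_zero)

lemma act_inj:
  assumes "act \<alpha> x = act \<beta> x"
  shows "\<alpha> = \<beta>"
proof -
  have "act (- \<beta> + \<alpha>) x = act (- \<beta>) (act \<beta> x)"
    by (simp only: act_add assms)
  also have "\<dots> = x" by (rule act_neg_act)
  finally have "- \<beta> + \<alpha> = 0" by (rule act_fixed)
  then show ?thesis by (simp add: algebra_simps)
qed

lemma act_representative_eq_iff: "act \<alpha> (r i) = act \<beta> (r j) \<longleftrightarrow> \<alpha> = \<beta> \<and> i = j"
proof
  assume eq: "act \<alpha> (r i) = act \<beta> (r j)"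
  then have "r i = act (- \<alpha> + \<beta>) (r j)" by (metis act_add act_neg_act)
  then have "i = j" by (rule representatives_distinct)
  with eq show "\<alpha> = \<beta> \<and> i = j" using act_inj by blast
qed simp

lemma bij_orbit_coordinates: "bij_betw (\<lambda>(\<alpha>, j). act \<alpha> (r j)) UNIV UNIV"
proof (rule bij_betwI')
  fix y
  obtain \<alpha> j where "y = act \<alpha> (r j)" using orbit_representative by blast
  then show "\<exists>x\<in>UNIV. y = (\<lambda>(\<alpha>, j). act \<alpha> (r j)) x" by auto
qed (auto simp: act_representative_eq_iff)

lemma Uinv_act_representative: "Uinv act r v (act \<alpha> (r j)) = v \<alpha> $ j"
proof -
  have "(THE (\<beta>, i). act \<alpha> (r j) = act \<beta> (r i)) = (\<alpha>, j)"
    by (rule the_equality) (auto simp: act_representative_eq_iff)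
  then show ?thesis unfolding Uinv_def by simp
qed

lemma Uinv_in_lp:
  assumes "v \<in> lp p"
  shows "Uinv act r v \<in> lp p"
proof -
  have "Uinv act r v \<circ> (\<lambda>(\<alpha>, j). act \<alpha> (r j)) = (\<lambda>(\<alpha>, j). v \<alpha> $ j)"
    by (auto simp: Uinv_act_representative)
  then show ?thesis
    using lp_uncurry_components[OF assms] lp_reindex_bij[OF bij_orbit_coordinates] by metis
qed

lemma dist_act_representatives:
  "\<rho> (act x (r i)) (act \<beta> (r j)) = \<rho> (act (x - \<beta>) (r i)) (r j)"
proof -
  have "\<rho> (act x (r i)) (act \<beta> (r j)) = \<rho> (act (- \<beta>) (act x (r i))) (act (- \<beta>) (act \<beta> (r j)))"
    by (rule dist_act[symmetric])
  also have "\<dots> = \<rho> (act (x - \<beta>) (r i)) (r j)"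
    by (simp add: act_add[symmetric] act_zero)
  finally show ?thesis .
qed

lemma finite_near_shifts:
  assumes "discrete_metric \<rho>"
  shows "finite {\<alpha>. \<exists>i j. \<rho> (act \<alpha> (r i)) (r j) \<le> R}"
proof -
  have "finite {\<alpha>. \<rho> (act \<alpha> (r i)) (r j) \<le> R}" for i j
  proof (rule finite_imageD)
    have "finite {x. \<rho> x (r j) \<le> R}"
      using assms unfolding discrete_metric_def by blast
    then show "finite ((\<lambda>\<alpha>. act \<alpha> (r i)) ` {\<alpha>. \<rho> (act \<alpha> (r i)) (r j) \<le> R})"
      by (rule finite_subset[rotated]) auto
    show "inj_on (\<lambda>\<alpha>. act \<alpha> (r i)) {\<alpha>. \<rho> (act \<alpha> (r i)) (r j) \<le> R}"
      by (auto intro: inj_onI act_inj)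
  qed
  moreover have "{\<alpha>. \<exists>i j. \<rho> (act \<alpha> (r i)) (r j) \<le> R} = (\<Union>i j. {\<alpha>. \<rho> (act \<alpha> (r i)) (r j) \<le> R})"
    by blast
  ultimately show ?thesis by simp
qed

end

definition kernel_diagonal ::
  "('x \<Rightarrow> 'x \<Rightarrow> complex) \<Rightarrow> (int^'n \<Rightarrow> 'x \<Rightarrow> 'x) \<Rightarrow> ('k::finite \<Rightarrow> 'x)
     \<Rightarrow> int^'n \<Rightarrow> int^'n \<Rightarrow> complex^'k^'k" where
  "kernel_diagonal k act r \<alpha> x = (\<chi> i j. k (act x (r i)) (act (x - \<alpha>) (r j)))"

lemma bounded_kernel_diagonal:
  fixes r :: "'k::finite \<Rightarrow> 'x"
  assumes "\<And>x y. norm (k x y) \<le> C"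
  shows "bounded (range (kernel_diagonal k act r \<alpha>))"
proof -
  have "norm (kernel_diagonal k act r \<alpha> x) \<le> real CARD('k) * (real CARD('k) * C)" for x
    by (rule norm_matrix_le_entry_bound) (simp add: kernel_diagonal_def assms)
  then show ?thesis unfolding bounded_iff by blast
qed

lemma band_row_sum_eq_diagonal_sum:
  fixes k :: "'x \<Rightarrow> 'x \<Rightarrow> complex"
  assumes periodic: "periodic_space \<rho> act r"
    and band: "\<And>x y. \<rho> x y > R \<Longrightarrow> k x y = 0"
    and near: "{\<alpha>. \<exists>i j. \<rho> (act \<alpha> (r i)) (r j) \<le> R} \<subseteq> B"
    and "finite B"
  shows "(\<Sum>\<^sub>\<infinity>y. k (act x (r i)) y * Uinv act r v y) =
    (\<Sum>\<alpha>\<in>B. kernel_diagonal k act r \<alpha> x *v Vshift \<alpha> v x) $ i"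
proof -
  define g where "g = (\<lambda>y. k (act x (r i)) y * Uinv act r v y)"
  define \<psi> where "\<psi> = (\<lambda>(\<alpha>, j). act (x - \<alpha>) (r j))"
  have "infsum g UNIV = infsum g (\<psi> ` (B \<times> UNIV))"
  proof (rule infsum_cong_neutral)
    fix y assume y_far: "y \<in> UNIV - \<psi> ` (B \<times> UNIV)"
    obtain \<beta> j where y: "y = act \<beta> (r j)" using orbit_representative[OF periodic] by blast
    have "x - \<beta> \<notin> B"
      using y_far unfolding y \<psi>_def by (auto intro: image_eqI[where x="(x - \<beta>, j)"])
    then have "\<not> \<rho> (act (x - \<beta>) (r i)) (r j) \<le> R"
      using near by blast
    then have "\<rho> (act x (r i)) y > R"
      unfolding y dist_act_representatives[OF periodic] by simp
    then show "g y = 0" unfolding g_def using band by simp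
  qed auto
  also have "\<dots> = (\<Sum>(\<alpha>, j)\<in>B \<times> UNIV. g (\<psi> (\<alpha>, j)))"
    using \<open>finite B\<close>
    by (subst infsum_reindex)
      (auto simp: inj_on_def \<psi>_def act_representative_eq_iff[OF periodic] infsum_finite split_def)
  also have "\<dots> = (\<Sum>\<alpha>\<in>B. (kernel_diagonal k act r \<alpha> x *v Vshift \<alpha> v x) $ i)"
    by (simp add: sum.cartesian_product[symmetric] g_def \<psi>_def kernel_diagonal_def
        Uinv_act_representative[OF periodic] matrix_vector_mult_def Vshift_def)
  finally show ?thesis by (simp add: g_def)
qed

theorem proposition3p1:
  fixes \<rho> :: "'x::countable \<Rightarrow> 'x \<Rightarrow> real"
    and act :: "int^'n \<Rightarrow> 'x \<Rightarrow> 'x"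
    and r :: "'k::finite \<Rightarrow> 'x"
    and p :: ennreal
    and A :: "('x \<Rightarrow> complex) \<Rightarrow> ('x \<Rightarrow> complex)"
  assumes "discrete_metric \<rho>"
    and "periodic_space \<rho> act r"
    and "1 \<le> p"
    and "band_operator \<rho> p A"
  shows "\<exists>(m::nat) (a :: int^'n \<Rightarrow> int^'n \<Rightarrow> complex^'k^'k).
           (\<forall>\<alpha>. bounded (range (a \<alpha>))) \<and>
           (\<forall>v \<in> (lp p :: (int^'n \<Rightarrow> complex^'k) set).
              Uop act r (A (Uinv act r v)) =
              (\<lambda>x. \<Sum>\<alpha>\<in>{\<alpha>. \<forall>i. \<bar>\<alpha> $ i\<bar> \<le> int m}. a \<alpha> x *v Vshift \<alpha> v x))"
proof -
  obtain k C R where kC: "\<And>x y. norm (k x y) \<le> C"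
    and band: "\<And>x y. \<rho> x y > R \<Longrightarrow> k x y = 0"
    and kA: "\<And>u x. u \<in> lp p \<Longrightarrow> A u x = (\<Sum>\<^sub>\<infinity>y. k x y * u y)"
    using assms(4) unfolding band_operator_def by metis
  obtain m where near: "{\<alpha>. \<exists>i j. \<rho> (act \<alpha> (r i)) (r j) \<le> R} \<subseteq> {\<alpha>. \<forall>i. \<bar>\<alpha> $ i\<bar> \<le> int m}"
    using finite_subset_box[OF finite_near_shifts[OF assms(2,1)]] by blast
  have "Uop act r (A (Uinv act r v)) =
      (\<lambda>x. \<Sum>\<alpha>\<in>{\<alpha>. \<forall>i. \<bar>\<alpha> $ i\<bar> \<le> int m}. kernel_diagonal k act r \<alpha> x *v Vshift \<alpha> v x)"
    if "v \<in> lp p" for v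
  proof (intro ext iffD2[OF vec_eq_iff] allI)
    fix x i
    show "Uop act r (A (Uinv act r v)) x $ i =
        (\<Sum>\<alpha>\<in>{\<alpha>. \<forall>i. \<bar>\<alpha> $ i\<bar> \<le> int m}. kernel_diagonal k act r \<alpha> x *v Vshift \<alpha> v x) $ i"
      using band_row_sum_eq_diagonal_sum[OF assms(2) band near finite_box]
      by (simp add: Uop_def kA Uinv_in_lp[OF assms(2) that])
  qed
  with bounded_kernel_diagonal[of k C act r, OF kC] show ?thesis by blast
qed

end
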